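(* Let $\Gamma\Rightarrow F$ be a binary tautological $\to$-sequent, and let $\Delta$ be the result of deleting from $\Gamma$ all irrelevant formulas of $\Gamma\Rightarrow F$. Then the sequent $\Delta\Rightarrow F$ is also tautological (and binary).
   Context: $\to$-formulas are built from propositional atoms with binary $\to$; a $\to$-sequent is $\Gamma\Rightarrow F$ with $\Gamma$ a finite multiset of $\to$-formulas and $F$ a $\to$-formula. A sequent $E_1,\dots,E_n\Rightarrow F$ is identified with the classical formula $E_1\wedge\dots\wedge E_n\to F$ for the purposes of being true (under a truth assignment), tautological, or binary; binary means no atom occurs more than twice. The head of a $\to$-formula is defined by: an atom is its own head; the head of $E\to F$ is the head of $F$. For a binary sequent $\Gamma\Rightarrow F$, the relevant formulas are the elements of the smallest set $S$ such that (1) every formula of $\Gamma$ whose head occurs in $F$ is in $S$, and (2) every formula of $\Gamma$ whose head occurs in some element of $S$ is in $S$. Formulas of $\Gamma$ that are not relevant are irrelevant. *)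

theory Defs
  imports Main "HOL-Library.Multiset"
begin

datatype 'a form = Atom 'a | Imp "'a form" "'a form"

fun tval :: "('a \<Rightarrow> bool) \<Rightarrow> 'a form \<Rightarrow> bool" where
  "tval v (Atom p) = v p"
| "tval v (Imp A B) = (tval v A \<longrightarrow> tval v B)"

definition seq_true :: "('a \<Rightarrow> bool) \<Rightarrow> 'a form multiset \<Rightarrow> 'a form \<Rightarrow> bool" where
  "seq_true v \<Gamma> F = ((\<forall>E \<in># \<Gamma>. tval v E) \<longrightarrow> tval v F)"

definition tautological :: "'a form multiset \<Rightarrow> 'a form \<Rightarrow> bool" where
  "tautological \<Gamma> F = (\<forall>v. seq_true v \<Gamma> F)"

fun occ :: "'a \<Rightarrow> 'a form \<Rightarrow> nat" where
  "occ p (Atom q) = (if p = q then 1 else 0)"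
| "occ p (Imp A B) = occ p A + occ p B"

definition seq_occ :: "'a \<Rightarrow> 'a form multiset \<Rightarrow> 'a form \<Rightarrow> nat" where
  "seq_occ p \<Gamma> F = (\<Sum>E\<in>#\<Gamma>. occ p E) + occ p F"

definition binary :: "'a form multiset \<Rightarrow> 'a form \<Rightarrow> bool" where
  "binary \<Gamma> F = (\<forall>p. seq_occ p \<Gamma> F \<le> 2)"

fun atoms :: "'a form \<Rightarrow> 'a set" where
  "atoms (Atom p) = {p}"
| "atoms (Imp A B) = atoms A \<union> atoms B"

fun head :: "'a form \<Rightarrow> 'a" where
  "head (Atom p) = p"
| "head (Imp A B) = head B"

inductive relevant :: "'a form multiset \<Rightarrow> 'a form \<Rightarrow> 'a form \<Rightarrow> bool"
  for \<Gamma> :: "'a form multiset" and F :: "'a form" where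
  base: "G \<in># \<Gamma> \<Longrightarrow> head G \<in> atoms F \<Longrightarrow> relevant \<Gamma> F G"
| step: "G \<in># \<Gamma> \<Longrightarrow> relevant \<Gamma> F H \<Longrightarrow> head G \<in> atoms H \<Longrightarrow> relevant \<Gamma> F G"

definition relevant_part :: "'a form multiset \<Rightarrow> 'a form \<Rightarrow> 'a form multiset" where
  "relevant_part \<Gamma> F = filter_mset (relevant \<Gamma> F) \<Gamma>"

end

theory Submission
  imports Defs
begin

(* Let R be the set of atoms of F together with all atoms of
   relevant formulas.  By the closure rules defining relevance, every formula
   of Gamma whose head lies in R is relevant; hence every irrelevant formula
   has its head outside R.  Given an assignment v making the relevant part
   true, modify it to w, which agrees with v on R and is True elsewhere.
   Then w makes every relevant formula true (it agrees with v on its atoms)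
   and every irrelevant formula true (its head is true, and a formula with a
   true head is true).  As Gamma => F is tautological, w makes F true, and so
   does v, since F's atoms lie in R.  This half does not use binarity.
   Binarity of the relevant part is immediate: deleting formulas from a
   sequent can only decrease the number of occurrences of each atom. *)

lemma tval_if_head: "w (head G) \<Longrightarrow> tval w G"
  by (induction G) auto

lemma tval_cong_atoms: "(\<And>p. p \<in> atoms G \<Longrightarrow> w p = v p) \<Longrightarrow> tval w G = tval v G"
  by (induction G) auto

lemma seq_occ_mono:
  assumes "\<Delta> \<subseteq># \<Gamma>"
  shows "seq_occ p \<Delta> F \<le> seq_occ p \<Gamma> F"
proof -
  from assms obtain \<Theta> where "\<Gamma> = \<Delta> + \<Theta>"
    by (auto simp: subset_mset.le_iff_add)
  then show ?thesis by (simp add: seq_occ_def)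
qed

lemma binary_mono: "\<Delta> \<subseteq># \<Gamma> \<Longrightarrow> binary \<Gamma> F \<Longrightarrow> binary \<Delta> F"
  unfolding binary_def by (meson seq_occ_mono order_trans)

definition relevant_atoms :: "'a form multiset \<Rightarrow> 'a form \<Rightarrow> 'a set" where
  "relevant_atoms \<Gamma> F = atoms F \<union> \<Union>{atoms H | H. relevant \<Gamma> F H}"

lemma atoms_subset_relevant_atoms: "atoms F \<subseteq> relevant_atoms \<Gamma> F"
  by (auto simp: relevant_atoms_def)

lemma relevant_atoms_subset: "relevant \<Gamma> F H \<Longrightarrow> atoms H \<subseteq> relevant_atoms \<Gamma> F"
  by (auto simp: relevant_atoms_def)

lemma relevant_if_head_relevant_atom:
  assumes "G \<in># \<Gamma>" and "head G \<in> relevant_atoms \<Gamma> F"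
  shows "relevant \<Gamma> F G"
  using assms by (auto simp: relevant_atoms_def intro: relevant.base relevant.step)

lemma tautological_relevant_part:
  assumes taut: "tautological \<Gamma> F"
  shows "tautological (relevant_part \<Gamma> F) F"
  unfolding tautological_def seq_true_def
proof (intro allI impI)
  fix v
  assume rel_true: "\<forall>E\<in>#relevant_part \<Gamma> F. tval v E"
  let ?R = "relevant_atoms \<Gamma> F"
  define w where "w p = (p \<notin> ?R \<or> v p)" for p
  have agree: "tval w G = tval v G" if "atoms G \<subseteq> ?R" for G
    using that by (intro tval_cong_atoms) (auto simp: w_def)
  have "tval w E" if E: "E \<in># \<Gamma>" for E
  proof (cases "relevant \<Gamma> F E")
    case True
    then have "tval v E"
      using rel_true E by (simp add: relevant_part_def)
    then show ?thesis
      using agree[OF relevant_atoms_subset[OF True]] by simp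
  next
    case False
    then have "head E \<notin> ?R"
      using relevant_if_head_relevant_atom[OF E] by blast
    then show ?thesis
      by (intro tval_if_head) (simp add: w_def)
  qed
  then have "tval w F"
    using taut by (simp add: tautological_def seq_true_def)
  then show "tval v F"
    using agree[OF atoms_subset_relevant_atoms] by simp
qed

theorem lemma4p1:
  fixes \<Gamma> :: "'a form multiset" and F :: "'a form"
  assumes "binary \<Gamma> F" and "tautological \<Gamma> F"
  shows "tautological (relevant_part \<Gamma> F) F \<and> binary (relevant_part \<Gamma> F) F"
proof
  show "tautological (relevant_part \<Gamma> F) F"
    using assms(2) by (rule tautological_relevant_part)
  have "relevant_part \<Gamma> F \<subseteq># \<Gamma>"
    by (simp add: relevant_part_def)
  then show "binary (relevant_part \<Gamma> F) F"
    using assms(1) by (rule binary_mono)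
qed

end
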